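(* Let $\Lambda=(\lambda_{pk})_{1\le p\le P,\,k\ge1}$ have independent entries $\lambda_{pk}\sim\mathrm{GDP}(\alpha_k,\eta_k)$, and suppose one of the following holds for all $k\ge1$: (I) $\alpha_k=\delta^k$, $\eta_k=\rho$ with $\delta>2$, $\rho>0$; (II) $\alpha_k=\delta$, $\eta_k=\rho^k$ with $\delta>2$, $0<\rho<1$; (III) $\alpha_k=\delta^k$, $\eta_k=\rho^k$ with $\delta>2$, $0<\rho<\delta$. Then $\mathbb P\{\max_{1\le p\le P}\sum_{k\ge1}\lambda_{pk}^2<\infty\}=1$. Moreover, let $\Sigma$ be any fixed $P\times P$ diagonal matrix, $\Omega=\Lambda\Lambda^T+\Sigma$, and for $K\ge1$ let $\Lambda^K$ be the $P\times K$ matrix of the first $K$ columns of $\Lambda$ and $\Omega^K=\Lambda^K(\Lambda^K)^T+\Sigma$. Given $\epsilon>0$ there exists $K_0=K_0(P,\rho,\delta,\epsilon)$ such that for all $K\ge K_0$, $\mathbb P\{d_\infty(\Omega,\Omega^K)<\epsilon\}>1-\epsilon$, where $d_\infty(A,B)=\max_{1\le i,j\le P}|a_{ij}-b_{ij}|$. One may take $K_0=O\!\left(\frac{\log(P/\epsilon^2)}{\log\delta}\right)$ under (I), $K_0=O\!\left(\frac{\log(P/\epsilon^2)}{\log(1/\rho)}\right)$ under (II), and $K_0=O\!\left(\frac{\log(P/\epsilon^2)}{\log(\delta/\rho)}\right)$ under (III).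
   Context: $\mathrm{GDP}(\alpha,\eta)$ with $\alpha,\eta>0$ denotes the generalized double Pareto distribution with density $\frac{\alpha}{2\eta}\left(1+\frac{|x|}{\eta}\right)^{-(\alpha+1)}$ on $\mathbb R$. *)

theory Defs
  imports "HOL-Probability.Probability"
begin

definition gdp_density :: "real \<Rightarrow> real \<Rightarrow> real \<Rightarrow> real" where
  "gdp_density a e x = a / (2 * e) * (1 + \<bar>x\<bar> / e) powr (- (a + 1))"

definition gdp_loadings ::
  "'a measure \<Rightarrow> nat \<Rightarrow> (nat \<Rightarrow> real) \<Rightarrow> (nat \<Rightarrow> real) \<Rightarrow> (nat \<Rightarrow> nat \<Rightarrow> 'a \<Rightarrow> real) \<Rightarrow> bool" where
  "gdp_loadings M P al et Lam \<longleftrightarrow>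
     prob_space M \<and>
     prob_space.indep_vars M (\<lambda>_. borel) (\<lambda>(p, k). Lam p k) ({1..P} \<times> {1..}) \<and>
     (\<forall>p\<in>{1..P}. \<forall>k\<ge>1. distributed M lborel (Lam p k)
         (\<lambda>x. ennreal (gdp_density (al k) (et k) x)))"

text \<open>Entry (i,j) of Omega = Lambda Lambda^T + Sigma (columns indexed from 1).\<close>
definition Omega_full :: "(nat \<Rightarrow> nat \<Rightarrow> 'a \<Rightarrow> real) \<Rightarrow> (nat \<Rightarrow> nat \<Rightarrow> real) \<Rightarrow> 'a \<Rightarrow> nat \<Rightarrow> nat \<Rightarrow> real" where
  "Omega_full Lam Sig w i j = (\<Sum>k. Lam i (Suc k) w * Lam j (Suc k) w) + Sig i j"

definition Omega_trunc :: "(nat \<Rightarrow> nat \<Rightarrow> 'a \<Rightarrow> real) \<Rightarrow> (nat \<Rightarrow> nat \<Rightarrow> real) \<Rightarrow> nat \<Rightarrow> 'a \<Rightarrow> nat \<Rightarrow> nat \<Rightarrow> real" where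
  "Omega_trunc Lam Sig K w i j = (\<Sum>k\<in>{1..K}. Lam i k w * Lam j k w) + Sig i j"

definition d_inf :: "nat \<Rightarrow> (nat \<Rightarrow> nat \<Rightarrow> real) \<Rightarrow> (nat \<Rightarrow> nat \<Rightarrow> real) \<Rightarrow> real" where
  "d_inf P A B = Max {\<bar>A i j - B i j\<bar> | i j. i \<in> {1..P} \<and> j \<in> {1..P}}"

end

theory Submission
  imports Defs
begin

text \<open>The second moment of \<open>GDP(\<alpha>, \<eta>)\<close> is \<open>2\<eta>\<^sup>2/((\<alpha>-1)(\<alpha>-2))\<close>, and in each of
  the three regimes this is at most a constant times \<open>r\<^sup>-\<^sup>2\<^sup>k\<close> for column \<open>k\<close>, with \<open>r > 1\<close>.
  Hence the expected tail \<open>\<Sum>\<^sub>k\<^sub>>\<^sub>K \<lambda>\<^sub>p\<^sub>k\<^sup>2\<close> of every row is \<open>O(r\<^sup>-\<^sup>2\<^sup>K)\<close>: for \<open>K = 0\<close> this gives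
  almost sure finiteness of the row sums, and by Markov's inequality and a union bound over
  rows, all row tails are below \<open>\<epsilon>\<close> with probability \<open>1 - O(P r\<^sup>-\<^sup>2\<^sup>K/\<epsilon>)\<close>. By Cauchy-Schwarz
  for series, entry \<open>(i, j)\<close> of \<open>\<Omega> - \<Omega>\<^sup>K\<close> is bounded by the mean of the tails of rows \<open>i\<close>
  and \<open>j\<close>, so \<open>K \<ge> log(P/\<epsilon>\<^sup>2)/(2 log r)\<close> up to an additive constant suffices.\<close>

subsection \<open>Second moment of the generalized double Pareto distribution\<close>

text \<open>With \<open>u = 1 + x/\<eta>\<close> one has \<open>x\<^sup>2 = \<eta>\<^sup>2(u\<^sup>2 - 2u + 1)\<close>, whence this antiderivative of
  \<open>x\<^sup>2\<close> times the density on \<open>[0, \<infinity>)\<close>.\<close>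
definition gdp_sq_primitive :: "real \<Rightarrow> real \<Rightarrow> real \<Rightarrow> real" where
  "gdp_sq_primitive a e x = - (a * e\<^sup>2 / 2) *
     ((1 + x/e) powr (2 - a) / (a - 2) - 2 * (1 + x/e) powr (1 - a) / (a - 1) + (1 + x/e) powr (- a) / a)"

lemma has_real_derivative_gdp_sq_primitive:
  fixes a e x :: real
  assumes "a > 2" "e > 0" "x \<ge> 0"
  shows "(gdp_sq_primitive a e has_real_derivative gdp_density a e x * x\<^sup>2) (at x)"
proof -
  define u where "u = 1 + x/e"
  have u: "u > 0" using assms by (simp add: u_def add_pos_nonneg)
  define w where "w = u powr (- (a + 1))"
  have pow1: "u powr (2 - a - 1) = u\<^sup>2 * w"
    using powr_add[of u 2 "- (a + 1)"] u by (simp add: w_def powr_numeral algebra_simps)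
  have pow2: "u powr (1 - a - 1) = u * w"
    using powr_add[of u 1 "- (a + 1)"] u by (simp add: w_def algebra_simps)
  have pow3: "u powr (- a - 1) = w"
    unfolding w_def by (rule arg_cong[of _ _ "(powr) u"]) simp
  have du: "((\<lambda>x. 1 + x/e) has_real_derivative 1/e) (at x)"
    using assms by (auto intro!: derivative_eq_intros)
  have dpow: "((\<lambda>x. (1 + x/e) powr s) has_real_derivative s * u powr (s - 1) * (1/e)) (at x)" for s
    using DERIV_fun_powr[OF du, of s] u by (simp add: u_def)
  have "(gdp_sq_primitive a e has_real_derivative
      - (a * e\<^sup>2 / 2) * ((2 - a) * u powr (2 - a - 1) * (1/e) / (a - 2)
        - 2 * ((1 - a) * u powr (1 - a - 1) * (1/e)) / (a - 1) + (- a) * u powr (- a - 1) * (1/e) / a)) (at x)"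
    unfolding gdp_sq_primitive_def by (intro DERIV_cmult DERIV_add DERIV_diff DERIV_cdivide dpow)
  also have "(2 - a) * u powr (2 - a - 1) * (1/e) / (a - 2) = - (u\<^sup>2 * w / e)"
    unfolding pow1 using assms by (simp add: field_simps)
  also have "2 * ((1 - a) * u powr (1 - a - 1) * (1/e)) / (a - 1) = - (2 * u * w / e)"
    unfolding pow2 using assms by (simp add: field_simps)
  also have "(- a) * u powr (- a - 1) * (1/e) / a = - (w / e)"
    unfolding pow3 using assms by simp
  also have "- (a * e\<^sup>2 / 2) * (- (u\<^sup>2 * w / e) - - (2 * u * w / e) + - (w / e))
      = gdp_density a e x * x\<^sup>2"
  proof -
    have density: "gdp_density a e x = a / (2 * e) * w"
      unfolding gdp_density_def w_def u_def using assms by (simp add: abs_of_nonneg)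
    have x: "x = e * (u - 1)"
      using assms by (simp add: u_def field_simps)
    show ?thesis
      unfolding density unfolding x using assms by (simp add: field_simps power2_eq_square)
  qed
  finally show ?thesis .
qed

lemma gdp_sq_primitive_tendsto_0:
  fixes a e :: real
  assumes "a > 2" "e > 0"
  shows "(gdp_sq_primitive a e \<longlongrightarrow> 0) at_top"
proof -
  have "filterlim (\<lambda>x. x * (1/e)) at_top at_top"
    using assms by (intro filterlim_at_top_mult_tendsto_pos[OF tendsto_const]) (auto simp: filterlim_ident)
  then have "filterlim (\<lambda>x. 1 + x/e) at_top at_top"
    by (intro filterlim_tendsto_add_at_top[OF tendsto_const]) simp
  then have "((\<lambda>x. (1 + x/e) powr s) \<longlongrightarrow> 0) at_top" if "s < 0" for s
    using tendsto_neg_powr that by blast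
  then have "(gdp_sq_primitive a e \<longlongrightarrow> - (a * e\<^sup>2 / 2) * (0 / (a - 2) - 2 * 0 / (a - 1) + 0 / a)) at_top"
    unfolding gdp_sq_primitive_def using assms by (intro tendsto_intros) auto
  then show ?thesis by simp
qed

lemma gdp_sq_primitive_0:
  fixes a e :: real
  assumes "a > 2"
  shows "gdp_sq_primitive a e 0 = - (e\<^sup>2 / ((a - 1) * (a - 2)))"
proof -
  have "a - 1 \<noteq> 0" "a - 2 \<noteq> 0" "a \<noteq> 0" using assms by auto
  then show ?thesis
    unfolding gdp_sq_primitive_def by (simp add: divide_simps) (simp add: algebra_simps power2_eq_square)
qed

lemma borel_measurable_gdp_density[measurable]: "gdp_density a e \<in> borel_measurable borel"
  unfolding gdp_density_def by measurable

lemma gdp_density_nonneg: "a \<ge> 0 \<Longrightarrow> e > 0 \<Longrightarrow> gdp_density a e x \<ge> 0"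
  unfolding gdp_density_def by simp

lemma gdp_density_minus: "gdp_density a e (- x) = gdp_density a e x"
  unfolding gdp_density_def by simp

lemma nn_integral_gdp_sq_nonneg_half:
  fixes a e :: real
  assumes "a > 2" "e > 0"
  shows "(\<integral>\<^sup>+x. ennreal (gdp_density a e x * x\<^sup>2) * indicator {0..} x \<partial>lborel) = ennreal (e\<^sup>2 / ((a - 1) * (a - 2)))"
  using nn_integral_FTC_atLeast[OF _ has_real_derivative_gdp_sq_primitive[OF assms]
      _ gdp_sq_primitive_tendsto_0[OF assms], of 0] assms
  by (simp add: gdp_sq_primitive_0 gdp_density_nonneg)

lemma nn_integral_gdp_sq_le:
  fixes a e :: real
  assumes "a > 2" "e > 0"
  shows "(\<integral>\<^sup>+x. ennreal (gdp_density a e x) * ennreal (x\<^sup>2) \<partial>lborel) \<le> ennreal (2 * e\<^sup>2 / ((a - 1) * (a - 2)))"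
proof -
  let ?g = "\<lambda>x. ennreal (gdp_density a e x * x\<^sup>2) * indicator {0..} x"
  have "(\<integral>\<^sup>+x. ennreal (gdp_density a e x) * ennreal (x\<^sup>2) \<partial>lborel) \<le> (\<integral>\<^sup>+x. ?g x + ?g (- x) \<partial>lborel)"
    using assms
    by (intro nn_integral_mono, case_tac "x \<ge> 0")
       (auto simp: gdp_density_minus ennreal_mult[symmetric] gdp_density_nonneg indicator_def)
  also have "\<dots> = (\<integral>\<^sup>+x. ?g x \<partial>lborel) + (\<integral>\<^sup>+x. ?g (- x) \<partial>lborel)"
    by (rule nn_integral_add) auto
  also have "(\<integral>\<^sup>+x. ?g (- x) \<partial>lborel) = (\<integral>\<^sup>+x. ?g x \<partial>lborel)"
    using nn_integral_real_affine[of ?g "-1" 0] by simp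
  also have "(\<integral>\<^sup>+x. ?g x \<partial>lborel) + (\<integral>\<^sup>+x. ?g x \<partial>lborel) = ennreal (2 * e\<^sup>2 / ((a - 1) * (a - 2)))"
    using assms by (simp add: nn_integral_gdp_sq_nonneg_half ennreal_plus[symmetric] del: ennreal_plus)
  finally show ?thesis .
qed

lemma gdp_sq_moment_le_scaled:
  fixes a d e :: real
  assumes "d > 2" "a \<ge> d" "e > 0"
  shows "2 * e\<^sup>2 / ((a - 1) * (a - 2)) \<le> 4 * d / (d - 2) * (e / a)\<^sup>2"
proof -
  have pos: "a * (d - 2) / d > 0" "a / 2 > 0" using assms by auto
  have "a / 2 \<le> a - 1" "a * (d - 2) / d \<le> a - 2" using assms by (auto simp: field_simps)
  then have "(a / 2) * (a * (d - 2) / d) \<le> (a - 1) * (a - 2)"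
    using pos by (intro mult_mono) auto
  then have "2 * e\<^sup>2 / ((a - 1) * (a - 2)) \<le> 2 * e\<^sup>2 / ((a / 2) * (a * (d - 2) / d))"
    using pos assms by (intro divide_left_mono) auto
  also have "\<dots> = 4 * d / (d - 2) * (e / a)\<^sup>2" using assms by (simp add: field_simps power2_eq_square)
  finally show ?thesis .
qed

lemma distributed_gdp_nn_integral_sq_le:
  fixes X :: "'a \<Rightarrow> real"
  assumes X: "distributed M lborel X (\<lambda>x. ennreal (gdp_density a e x))"
    and "d > 2" "a \<ge> d" "e > 0"
  shows "(\<integral>\<^sup>+w. ennreal ((X w)\<^sup>2) \<partial>M) \<le> ennreal (4 * d / (d - 2) * (e / a)\<^sup>2)"
proof -
  have "(\<integral>\<^sup>+w. ennreal ((X w)\<^sup>2) \<partial>M) = (\<integral>\<^sup>+x. ennreal (gdp_density a e x) * ennreal (x\<^sup>2) \<partial>lborel)"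
    by (rule distributed_nn_integral[OF X, symmetric]) simp
  also have "\<dots> \<le> ennreal (2 * e\<^sup>2 / ((a - 1) * (a - 2)))"
    using assms by (intro nn_integral_gdp_sq_le) auto
  also have "\<dots> \<le> ennreal (4 * d / (d - 2) * (e / a)\<^sup>2)"
    using assms by (intro ennreal_leI gdp_sq_moment_le_scaled)
  finally show ?thesis .
qed

subsection \<open>Truncating series of random squares with geometrically decaying moments\<close>

lemma suminf_ennreal_less_imp:
  fixes f :: "nat \<Rightarrow> real"
  assumes "\<And>k. f k \<ge> 0" and "(\<Sum>k. ennreal (f k)) < ennreal e"
  shows "summable f \<and> suminf f < e"
proof -
  have f: "summable f" using assms by (intro summable_suminf_not_top) auto
  then have "(\<Sum>k. ennreal (f k)) = ennreal (suminf f)"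
    using assms(1) by (intro suminf_ennreal2) auto
  then show ?thesis using assms f suminf_nonneg[OF f] by (auto simp: ennreal_less_iff)
qed

text \<open>Cauchy-Schwarz for the tails, in the form \<open>|x y| \<le> (x\<^sup>2 + y\<^sup>2)/2\<close>.\<close>
lemma suminf_mult_tail_less:
  fixes a b :: "nat \<Rightarrow> real"
  assumes sa: "summable (\<lambda>k. (a (k + K))\<^sup>2)" and sb: "summable (\<lambda>k. (b (k + K))\<^sup>2)"
    and ta: "(\<Sum>k. (a (k + K))\<^sup>2) < e" and tb: "(\<Sum>k. (b (k + K))\<^sup>2) < e"
  shows "summable (\<lambda>k. a k * b k) \<and> \<bar>(\<Sum>k. a k * b k) - (\<Sum>k<K. a k * b k)\<bar> < e"
proof -
  have am_gm: "\<bar>x * y\<bar> \<le> (x\<^sup>2 + y\<^sup>2) / 2" for x y :: real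
  proof -
    have "0 \<le> (\<bar>x\<bar> - \<bar>y\<bar>)\<^sup>2" by simp
    then show ?thesis by (simp add: power2_eq_square abs_mult algebra_simps)
  qed
  have s2: "summable (\<lambda>k. ((a (k + K))\<^sup>2 + (b (k + K))\<^sup>2) / 2)"
    using sa sb by (intro summable_divide summable_add)
  have sab: "summable (\<lambda>k. \<bar>a (k + K) * b (k + K)\<bar>)"
    by (rule summable_comparison_test[OF _ s2]) (use am_gm in auto)
  then have "summable (\<lambda>k. a (k + K) * b (k + K))" by (rule summable_rabs_cancel)
  then have sfull: "summable (\<lambda>k. a k * b k)" using summable_iff_shift[of "\<lambda>k. a k * b k" K] by simp
  have "\<bar>(\<Sum>k. a k * b k) - (\<Sum>k<K. a k * b k)\<bar> = \<bar>\<Sum>k. a (k + K) * b (k + K)\<bar>"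
    using suminf_split_initial_segment[OF sfull, of K] by simp
  also have "\<dots> \<le> (\<Sum>k. \<bar>a (k + K) * b (k + K)\<bar>)" by (rule summable_rabs[OF sab])
  also have "\<dots> \<le> (\<Sum>k. ((a (k + K))\<^sup>2 + (b (k + K))\<^sup>2) / 2)"
    by (rule suminf_le[OF _ sab s2]) (use am_gm in auto)
  also have "\<dots> = ((\<Sum>k. (a (k + K))\<^sup>2) + (\<Sum>k. (b (k + K))\<^sup>2)) / 2"
    using suminf_divide[OF summable_add[OF sa sb], of 2] suminf_add[OF sa sb] by simp
  also have "\<dots> < e" using ta tb by simp
  finally show ?thesis using sfull by simp
qed

lemma d_inf_less_iff:
  assumes "P \<ge> 1"
  shows "d_inf P A B < e \<longleftrightarrow> (\<forall>i\<in>{1..P}. \<forall>j\<in>{1..P}. \<bar>A i j - B i j\<bar> < e)"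
proof -
  have "{\<bar>A i j - B i j\<bar> | i j. i \<in> {1..P} \<and> j \<in> {1..P}} = (\<lambda>(i, j). \<bar>A i j - B i j\<bar>) ` ({1..P} \<times> {1..P})"
    by (auto simp: image_iff) blast
  then show ?thesis
    unfolding d_inf_def using assms by (subst Max_less_iff) auto
qed

lemma d_inf_Omega_trunc_less:
  assumes P: "P \<ge> 1"
    and tails: "\<And>p. p \<in> {1..P} \<Longrightarrow> (\<Sum>k. ennreal ((Lam p (Suc (k + K)) w)\<^sup>2)) < ennreal e"
  shows "d_inf P (Omega_full Lam Sig w) (Omega_trunc Lam Sig K w) < e"
  unfolding d_inf_less_iff[OF P]
proof (intro ballI)
  fix i j assume i: "i \<in> {1..P}" and j: "j \<in> {1..P}"
  have tail: "summable (\<lambda>k. (Lam p (Suc (k + K)) w)\<^sup>2) \<and> (\<Sum>k. (Lam p (Suc (k + K)) w)\<^sup>2) < e"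
    if "p \<in> {1..P}" for p
    by (rule suminf_ennreal_less_imp[OF _ tails[OF that]]) simp
  have "\<bar>(\<Sum>k. Lam i (Suc k) w * Lam j (Suc k) w) - (\<Sum>k<K. Lam i (Suc k) w * Lam j (Suc k) w)\<bar> < e"
    using suminf_mult_tail_less[of "\<lambda>k. Lam i (Suc k) w" K "\<lambda>k. Lam j (Suc k) w" e] tail[OF i] tail[OF j]
    by blast
  moreover have "(\<Sum>k\<in>{1..K}. Lam i k w * Lam j k w) = (\<Sum>k<K. Lam i (Suc k) w * Lam j (Suc k) w)"
    using sum.atLeast1_atMost_eq[of "\<lambda>k. Lam i k w * Lam j k w" K] by simp
  ultimately show "\<bar>Omega_full Lam Sig w i j - Omega_trunc Lam Sig K w i j\<bar> < e"
    unfolding Omega_full_def Omega_trunc_def by simp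
qed

locale geometric_sq_moments = prob_space M for M :: "'a measure" +
  fixes P :: nat and Lam :: "nat \<Rightarrow> nat \<Rightarrow> 'a \<Rightarrow> real" and A q :: real
  assumes measurable_Lam: "\<And>p k. p \<in> {1..P} \<Longrightarrow> k \<ge> 1 \<Longrightarrow> Lam p k \<in> borel_measurable M"
    and nn_integral_sq_le:
      "\<And>p k. p \<in> {1..P} \<Longrightarrow> k \<ge> 1 \<Longrightarrow> (\<integral>\<^sup>+w. ennreal ((Lam p k w)\<^sup>2) \<partial>M) \<le> ennreal (A * q ^ k)"
    and A_nonneg: "A \<ge> 0" and q_pos: "0 < q" and q_less_1: "q < 1"
begin

definition row_tail :: "nat \<Rightarrow> nat \<Rightarrow> 'a \<Rightarrow> ennreal" where
  "row_tail p K w = (\<Sum>k. ennreal ((Lam p (Suc (k + K)) w)\<^sup>2))"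

lemma borel_measurable_row_tail: "p \<in> {1..P} \<Longrightarrow> row_tail p K \<in> borel_measurable M"
  unfolding row_tail_def using measurable_Lam by measurable

lemma nn_integral_row_tail_le:
  assumes p: "p \<in> {1..P}"
  shows "(\<integral>\<^sup>+w. row_tail p K w \<partial>M) \<le> ennreal (A * q ^ (K + 1) / (1 - q))"
proof -
  have "(\<integral>\<^sup>+w. row_tail p K w \<partial>M) = (\<Sum>k. \<integral>\<^sup>+w. ennreal ((Lam p (Suc (k + K)) w)\<^sup>2) \<partial>M)"
    unfolding row_tail_def by (rule nn_integral_suminf) (use measurable_Lam[OF p] in auto)
  also have "\<dots> \<le> (\<Sum>k. ennreal (A * q ^ (K + 1) * q ^ k))"
  proof (rule suminf_le)
    show "(\<integral>\<^sup>+w. ennreal ((Lam p (Suc (k + K)) w)\<^sup>2) \<partial>M) \<le> ennreal (A * q ^ (K + 1) * q ^ k)" for k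
      using nn_integral_sq_le[OF p, of "k + K + 1"] by (simp add: power_add mult_ac)
  qed auto
  also have "\<dots> = ennreal (A * q ^ (K + 1) * (1 / (1 - q)))"
    using q_pos q_less_1 A_nonneg
    by (intro suminf_ennreal_eq sums_mult geometric_sums) auto
  finally show ?thesis by simp
qed

lemma summable_iff_row_tail_0_finite:
  "summable (\<lambda>k. (Lam p (Suc k) w)\<^sup>2) \<longleftrightarrow> row_tail p 0 w \<noteq> \<infinity>"
proof
  assume "summable (\<lambda>k. (Lam p (Suc k) w)\<^sup>2)"
  then show "row_tail p 0 w \<noteq> \<infinity>"
    unfolding row_tail_def infinity_ennreal_def by (simp add: ennreal_suminf_neq_top)
next
  assume "row_tail p 0 w \<noteq> \<infinity>"
  then show "summable (\<lambda>k. (Lam p (Suc k) w)\<^sup>2)"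
    unfolding row_tail_def infinity_ennreal_def by (intro summable_suminf_not_top) auto
qed

lemma prob_rows_summable:
  "prob {w \<in> space M. \<forall>p\<in>{1..P}. summable (\<lambda>k. (Lam p (Suc k) w)\<^sup>2)} = 1"
proof -
  let ?S = "{w \<in> space M. \<forall>p\<in>{1..P}. row_tail p 0 w \<noteq> \<infinity>}"
  have "AE w in M. row_tail p 0 w \<noteq> \<infinity>" if p: "p \<in> {1..P}" for p
  proof (rule nn_integral_PInf_AE[OF borel_measurable_row_tail[OF p]])
    show "(\<integral>\<^sup>+w. row_tail p 0 w \<partial>M) \<noteq> \<infinity>"
      using nn_integral_row_tail_le[OF p, of 0] unfolding infinity_ennreal_def
      by (rule neq_top_trans[OF ennreal_neq_top])
  qed
  then have "AE w in M. \<forall>p\<in>{1..P}. row_tail p 0 w \<noteq> \<infinity>"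
    by (intro AE_finite_allI) auto
  then have "AE w in M. w \<in> ?S"
    using AE_space by eventually_elim auto
  moreover have "?S \<in> events"
  proof -
    have [measurable]: "row_tail p 0 \<in> borel_measurable M" if "p \<in> {1..P}" for p
      using borel_measurable_row_tail[OF that] .
    show ?thesis by measurable
  qed
  ultimately show ?thesis
    unfolding summable_iff_row_tail_0_finite by (simp add: prob_eq_1)
qed

lemma prob_row_tail_ge_le:
  assumes p: "p \<in> {1..P}" and e: "e > 0"
  shows "prob {w \<in> space M. ennreal e \<le> row_tail p K w} \<le> A * q ^ (K + 1) / (1 - q) / e"
proof -
  let ?S = "{w \<in> space M. ennreal e \<le> row_tail p K w}"
  have S: "?S \<in> events" using borel_measurable_row_tail[OF p] by measurable
  have "ennreal (e * prob ?S) = (\<integral>\<^sup>+w. ennreal e * indicator ?S w \<partial>M)"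
    using S e by (simp add: nn_integral_cmult_indicator emeasure_eq_measure ennreal_mult)
  also have "\<dots> \<le> (\<integral>\<^sup>+w. row_tail p K w \<partial>M)"
    by (rule nn_integral_mono) (auto simp: indicator_def)
  also have "\<dots> \<le> ennreal (A * q ^ (K + 1) / (1 - q))" by (rule nn_integral_row_tail_le[OF p])
  finally have "e * prob ?S \<le> A * q ^ (K + 1) / (1 - q)"
    using A_nonneg q_pos q_less_1 by (simp add: ennreal_le_iff)
  then show ?thesis using e by (metis mult.commute pos_le_divide_eq)
qed

lemma prob_d_inf_Omega_trunc_less:
  assumes P: "P \<ge> 1" and e: "e > 0" and small: "real P * (A * q ^ (K + 1) / (1 - q)) < e\<^sup>2"
  shows "prob {w \<in> space M. d_inf P (Omega_full Lam Sig w) (Omega_trunc Lam Sig K w) < e} > 1 - e"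
proof -
  let ?E = "{w \<in> space M. d_inf P (Omega_full Lam Sig w) (Omega_trunc Lam Sig K w) < e}"
  define Bad where "Bad p = {w \<in> space M. ennreal e \<le> row_tail p K w}" for p
  have Bad_events: "Bad p \<in> events" if "p \<in> {1..P}" for p
    unfolding Bad_def using borel_measurable_row_tail[OF that] by measurable
  have E_events: "?E \<in> events"
  proof -
    have [measurable]: "(\<lambda>w. Omega_full Lam Sig w i j - Omega_trunc Lam Sig K w i j) \<in> borel_measurable M"
      if "i \<in> {1..P}" "j \<in> {1..P}" for i j
      unfolding Omega_full_def Omega_trunc_def using measurable_Lam that by measurable
    show ?thesis unfolding d_inf_less_iff[OF P] by measurable
  qed
  have "prob (\<Union>p\<in>{1..P}. Bad p) \<le> (\<Sum>p\<in>{1..P}. prob (Bad p))"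
    using Bad_events by (intro finite_measure_subadditive_finite) auto
  also have "\<dots> \<le> (\<Sum>p\<in>{1..P}. A * q ^ (K + 1) / (1 - q) / e)"
    unfolding Bad_def using e by (intro sum_mono prob_row_tail_ge_le) auto
  also have "\<dots> = real P * (A * q ^ (K + 1) / (1 - q)) / e"
    by simp
  also have "\<dots> < e"
    using small by (subst pos_divide_less_eq[OF e]) (simp add: power2_eq_square)
  finally have "1 - e < prob (space M - (\<Union>p\<in>{1..P}. Bad p))"
    using Bad_events by (subst prob_compl) auto
  also have "\<dots> \<le> prob ?E"
  proof (rule finite_measure_mono[OF _ E_events])
    show "space M - (\<Union>p\<in>{1..P}. Bad p) \<subseteq> ?E"
      by (auto simp: Bad_def row_tail_def not_le intro!: d_inf_Omega_trunc_less[OF P])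
  qed
  finally show ?thesis .
qed

end

subsection \<open>The three parameter regimes\<close>

lemma gdp_regimes_geometric:
  fixes \<delta> \<rho> r :: real and al et :: "nat \<Rightarrow> real"
  assumes
    "(\<delta> > 2 \<and> \<rho> > 0 \<and> (\<forall>k\<ge>1. al k = \<delta> ^ k \<and> et k = \<rho>) \<and> r = \<delta>) \<or>
     (\<delta> > 2 \<and> 0 < \<rho> \<and> \<rho> < 1 \<and> (\<forall>k\<ge>1. al k = \<delta> \<and> et k = \<rho> ^ k) \<and> r = 1 / \<rho>) \<or>
     (\<delta> > 2 \<and> 0 < \<rho> \<and> \<rho> < \<delta> \<and> (\<forall>k\<ge>1. al k = \<delta> ^ k \<and> et k = \<rho> ^ k) \<and> r = \<delta> / \<rho>)"
  shows "r > 1 \<and> (\<exists>B>0. \<forall>k\<ge>1. al k \<ge> \<delta> \<and> et k > 0 \<and> (et k / al k)\<^sup>2 = B * (1 / r\<^sup>2) ^ k)"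
proof -
  have power_ge: "\<delta> ^ k \<ge> \<delta>" if "k \<ge> 1" "\<delta> > 2" for k
    using that by (simp add: self_le_power)
  note simps = power_divide power_mult_distrib power_one_over power_mult[symmetric] mult.commute[of 2]
  from assms show ?thesis
  proof (elim disjE conjE)
    assume "\<delta> > 2" "\<rho> > 0" "\<forall>k\<ge>1. al k = \<delta> ^ k \<and> et k = \<rho>" "r = \<delta>"
    then show ?thesis
      by (intro conjI exI[of _ "\<rho>\<^sup>2"]) (use power_ge in \<open>auto simp: simps\<close>)
  next
    assume "\<delta> > 2" "0 < \<rho>" "\<rho> < 1" "\<forall>k\<ge>1. al k = \<delta> \<and> et k = \<rho> ^ k" "r = 1 / \<rho>"
    then show ?thesis
      by (intro conjI exI[of _ "1 / \<delta>\<^sup>2"]) (auto simp: simps)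
  next
    assume "\<delta> > 2" "0 < \<rho>" "\<rho> < \<delta>" "\<forall>k\<ge>1. al k = \<delta> ^ k \<and> et k = \<rho> ^ k" "r = \<delta> / \<rho>"
    then show ?thesis
      by (intro conjI exI[of _ 1]) (use power_ge in \<open>auto simp: simps\<close>)
  qed
qed

lemma gdp_loadings_geometric_sq_moments:
  assumes G: "gdp_loadings M P al et Lam" and "\<delta> > 2" "B \<ge> 0" "0 < q" "q < 1"
    and geom: "\<And>k. k \<ge> 1 \<Longrightarrow> al k \<ge> \<delta> \<and> et k > 0 \<and> (et k / al k)\<^sup>2 = B * q ^ k"
  shows "geometric_sq_moments M P Lam (4 * \<delta> / (\<delta> - 2) * B) q"
proof -
  have D: "distributed M lborel (Lam p k) (\<lambda>x. ennreal (gdp_density (al k) (et k) x))"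
    if "p \<in> {1..P}" "k \<ge> 1" for p k
    using G that by (simp add: gdp_loadings_def)
  interpret prob_space M using G by (simp add: gdp_loadings_def)
  show ?thesis
  proof unfold_locales
    fix p k :: nat assume p: "p \<in> {1..P}" and k: "k \<ge> 1"
    show "Lam p k \<in> borel_measurable M"
      using distributed_measurable[OF D[OF p k]] by simp
    show "(\<integral>\<^sup>+w. ennreal ((Lam p k w)\<^sup>2) \<partial>M) \<le> ennreal (4 * \<delta> / (\<delta> - 2) * B * q ^ k)"
      using distributed_gdp_nn_integral_sq_le[OF D[OF p k], of \<delta>] geom[OF k] assms
      by (simp add: mult.assoc)
  qed (use assms in auto)
qed

subsection \<open>Choice of the truncation level\<close>

lemma truncation_level_exists:
  fixes r V :: real
  assumes r: "r > 1" and V: "V > 0"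
  shows "\<exists>C. \<forall>P :: nat. P \<ge> 1 \<longrightarrow> (\<forall>\<epsilon> :: real. \<epsilon> > 0 \<longrightarrow> (\<exists>K0 :: nat.
           (\<epsilon> < 1 \<longrightarrow> real K0 \<le> C * (1 + ln (real P / \<epsilon>\<^sup>2)) / ln r) \<and>
           (\<forall>K \<ge> K0. real P * V * (1 / r\<^sup>2) ^ K < \<epsilon>\<^sup>2)))"
proof (intro exI[of _ "\<bar>ln V\<bar> + 1 + ln r"] allI impI)
  fix P :: nat and \<epsilon> :: real
  assume P: "P \<ge> 1" and e: "\<epsilon> > 0"
  define c where "c = \<bar>ln V\<bar>"
  define L where "L = ln (real P / \<epsilon>\<^sup>2)"
  define X where "X = (max 0 L + c + 1) / (2 * ln r)"
  have lr: "ln r > 0" using r by simp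
  have X: "X \<ge> 0" using lr by (simp add: X_def c_def)
  show "\<exists>K0 :: nat. (\<epsilon> < 1 \<longrightarrow> real K0 \<le> (c + 1 + ln r) * (1 + L) / ln r) \<and>
      (\<forall>K \<ge> K0. real P * V * (1 / r\<^sup>2) ^ K < \<epsilon>\<^sup>2)"
    unfolding c_def L_def
  proof (intro exI[of _ "nat \<lceil>X\<rceil>"] conjI impI allI)
    assume "\<epsilon> < 1"
    then have "\<epsilon>\<^sup>2 \<le> 1" using e by (simp add: power_le_one)
    then have "1 \<le> real P / \<epsilon>\<^sup>2" using P e by (simp add: field_simps)
    then have "L \<ge> 0" by (simp add: L_def)
    have "(L + c + 1) / 2 + ln r \<le> (c + 1 + ln r) * (1 + L)"
      using \<open>L \<ge> 0\<close> lr by (simp add: c_def algebra_simps add_increasing)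
    have "X + 1 = ((L + c + 1) / 2 + ln r) / ln r"
      using \<open>L \<ge> 0\<close> lr by (simp add: X_def field_simps)
    also have "\<dots> \<le> (c + 1 + ln r) * (1 + L) / ln r"
      using \<open>(L + c + 1) / 2 + ln r \<le> (c + 1 + ln r) * (1 + L)\<close> lr by (intro divide_right_mono) auto
    finally have "X + 1 \<le> (c + 1 + ln r) * (1 + L) / ln r" .
    moreover have "real (nat \<lceil>X\<rceil>) \<le> X + 1" using X by linarith
    ultimately show "real (nat \<lceil>X\<rceil>) \<le> (\<bar>ln V\<bar> + 1 + ln r) * (1 + ln (real P / \<epsilon>\<^sup>2)) / ln r"
      by (simp add: c_def L_def)
  next
    fix K assume "nat \<lceil>X\<rceil> \<le> K"
    then have "real K \<ge> X" by linarith
    then have "2 * real K * ln r > L + ln V"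
      using lr by (simp add: X_def c_def field_simps)
    then have "ln (real P * V * (1 / r\<^sup>2) ^ K) < ln (\<epsilon>\<^sup>2)"
      using P V e r by (simp add: L_def ln_mult ln_div ln_realpow)
    then show "real P * V * (1 / r\<^sup>2) ^ K < \<epsilon>\<^sup>2"
      using P V e r by (subst (asm) ln_less_cancel_iff) auto
  qed
qed

theorem lemma2:
  fixes \<delta> \<rho> r :: real and al et :: "nat \<Rightarrow> real"
  assumes cases:
    "(\<delta> > 2 \<and> \<rho> > 0 \<and> (\<forall>k\<ge>1. al k = \<delta> ^ k \<and> et k = \<rho>) \<and> r = \<delta>) \<or>
     (\<delta> > 2 \<and> 0 < \<rho> \<and> \<rho> < 1 \<and> (\<forall>k\<ge>1. al k = \<delta> \<and> et k = \<rho> ^ k) \<and> r = 1 / \<rho>) \<or>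
     (\<delta> > 2 \<and> 0 < \<rho> \<and> \<rho> < \<delta> \<and> (\<forall>k\<ge>1. al k = \<delta> ^ k \<and> et k = \<rho> ^ k) \<and> r = \<delta> / \<rho>)"
  shows
    "(\<forall>(M :: 'a measure) P Lam. P \<ge> 1 \<longrightarrow> gdp_loadings M P al et Lam \<longrightarrow>
        measure M {w \<in> space M. \<forall>p\<in>{1..P}. summable (\<lambda>k. (Lam p (Suc k) w)\<^sup>2)} = 1)
     \<and>
     (\<exists>C :: real. \<forall>P :: nat. P \<ge> 1 \<longrightarrow> (\<forall>\<epsilon> :: real. \<epsilon> > 0 \<longrightarrow>
        (\<exists>K0 :: nat.
           (\<epsilon> < 1 \<longrightarrow> real K0 \<le> C * (1 + ln (real P / \<epsilon>\<^sup>2)) / ln r) \<and>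
           (\<forall>(M :: 'a measure) Lam Sig. gdp_loadings M P al et Lam \<longrightarrow>
              (\<forall>i j. i \<noteq> j \<longrightarrow> Sig i j = 0) \<longrightarrow>
              (\<forall>K. K \<ge> K0 \<and> K \<ge> 1 \<longrightarrow>
                 measure M {w \<in> space M.
                   d_inf P (Omega_full Lam Sig w) (Omega_trunc Lam Sig K w) < \<epsilon>} > 1 - \<epsilon>)))))"
proof -
  obtain B where r: "r > 1" and "B > 0"
    and geom: "\<And>k. k \<ge> 1 \<Longrightarrow> al k \<ge> \<delta> \<and> et k > 0 \<and> (et k / al k)\<^sup>2 = B * (1 / r\<^sup>2) ^ k"
    using gdp_regimes_geometric[OF cases] by blast
  define q where "q = 1 / r\<^sup>2"
  define A where "A = 4 * \<delta> / (\<delta> - 2) * B"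
  have q: "0 < q" "q < 1" and "A > 0"
    using r cases \<open>B > 0\<close> by (auto simp: q_def A_def)
  have moments: "geometric_sq_moments M P Lam A q" if "gdp_loadings M P al et Lam"
    for M :: "'a measure" and P Lam
    unfolding A_def using that cases \<open>B > 0\<close> q geom
    by (intro gdp_loadings_geometric_sq_moments[of _ _ al et _ \<delta>]) (auto simp: q_def)
  obtain C where C: "\<forall>P :: nat. P \<ge> 1 \<longrightarrow> (\<forall>\<epsilon> :: real. \<epsilon> > 0 \<longrightarrow> (\<exists>K0 :: nat.
      (\<epsilon> < 1 \<longrightarrow> real K0 \<le> C * (1 + ln (real P / \<epsilon>\<^sup>2)) / ln r) \<and>
      (\<forall>K \<ge> K0. real P * (A * q / (1 - q)) * q ^ K < \<epsilon>\<^sup>2)))"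
    using truncation_level_exists[OF r, of "A * q / (1 - q)"] \<open>A > 0\<close> q by (auto simp: q_def)
  have tail_bound: "real P * (A * q / (1 - q)) * q ^ K = real P * (A * q ^ (K + 1) / (1 - q))" for P K :: nat
    by (simp add: mult_ac)
  \<comment> \<open>\<open>\<Sigma>\<close> cancels in \<open>\<Omega> - \<Omega>\<^sup>K\<close>.\<close>
  show ?thesis
  proof (intro conjI allI impI exI[of _ C])
    fix M :: "'a measure" and P Lam
    assume "gdp_loadings M P al et Lam"
    then show "measure M {w \<in> space M. \<forall>p\<in>{1..P}. summable (\<lambda>k. (Lam p (Suc k) w)\<^sup>2)} = 1"
      by (rule geometric_sq_moments.prob_rows_summable[OF moments])
  next
    fix P :: nat and \<epsilon> :: real
    assume P: "P \<ge> 1" and e: "\<epsilon> > 0"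
    then obtain K0 where bound: "\<epsilon> < 1 \<longrightarrow> real K0 \<le> C * (1 + ln (real P / \<epsilon>\<^sup>2)) / ln r"
      and small: "\<And>K. K \<ge> K0 \<Longrightarrow> real P * (A * q ^ (K + 1) / (1 - q)) < \<epsilon>\<^sup>2"
      using C unfolding tail_bound by blast
    show "\<exists>K0 :: nat. (\<epsilon> < 1 \<longrightarrow> real K0 \<le> C * (1 + ln (real P / \<epsilon>\<^sup>2)) / ln r) \<and>
        (\<forall>(M :: 'a measure) Lam Sig. gdp_loadings M P al et Lam \<longrightarrow> (\<forall>i j. i \<noteq> j \<longrightarrow> Sig i j = 0) \<longrightarrow>
          (\<forall>K. K \<ge> K0 \<and> K \<ge> 1 \<longrightarrow>
            measure M {w \<in> space M. d_inf P (Omega_full Lam Sig w) (Omega_trunc Lam Sig K w) < \<epsilon>} > 1 - \<epsilon>))"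
      using bound small by (auto intro!: exI[of _ K0] geometric_sq_moments.prob_d_inf_Omega_trunc_less[OF moments] P e)
  qed
qed

end
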